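(* Let $\alpha$ be an infinite permutation with $p_{\alpha}(n)=n$ for all $n\ge1$. Then the underlying word $s$ of $\alpha$ is either ultimately periodic or Sturmian.
   Context: An infinite permutation is an equivalence class of sequences of pairwise distinct reals under $a\sim b\iff(a[i]<a[j]\Leftrightarrow b[i]<b[j]\ \forall i,j)$; write $\alpha=(\alpha[n])_{n\ge0}$ with the induced order. $p_\alpha(n)$ is the number of distinct factors $\alpha[i..i+n-1]$ of length $n$, each regarded as a finite permutation (relative order). The underlying word of $\alpha$ is the infinite binary word $s=s[0]s[1]\cdots$ with $s[i]=0$ if $\alpha[i]<\alpha[i+1]$ and $s[i]=1$ otherwise. An infinite word is ultimately periodic if it equals $vwww\cdots$ for finite words $v,w$ with $w$ nonempty. An infinite word $u$ is Sturmian if it is not ultimately periodic and has exactly $n+1$ distinct factors (blocks of consecutive letters) of length $n$ for every $n\ge1$. *)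

theory Defs
  imports Complex_Main "HOL-Library.Omega_Words_Fun"
begin

text \<open>An infinite permutation is represented by a representative sequence
  a :: nat => real of pairwise distinct reals (inj a); all notions below depend
  only on the relative order of the values, i.e. on the equivalence class.\<close>

text \<open>The factor of length n starting at position i, regarded as a finite
  permutation: its relative order, as a relation on positions 0..n-1.\<close>
definition perm_factor :: "(nat \<Rightarrow> real) \<Rightarrow> nat \<Rightarrow> nat \<Rightarrow> (nat \<Rightarrow> nat \<Rightarrow> bool)" where
  "perm_factor a i n = (\<lambda>j k. j < n \<and> k < n \<and> a (i + j) < a (i + k))"

definition perm_complexity :: "(nat \<Rightarrow> real) \<Rightarrow> nat \<Rightarrow> nat" where
  "perm_complexity a n = card {perm_factor a i n | i. True}"

definition underlying_word :: "(nat \<Rightarrow> real) \<Rightarrow> nat word" where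
  "underlying_word a = (\<lambda>i. if a i < a (Suc i) then 0 else 1)"

definition ultimately_periodic :: "'b word \<Rightarrow> bool" where
  "ultimately_periodic u \<longleftrightarrow> (\<exists>v w. w \<noteq> [] \<and> u = v \<frown> w\<^sup>\<omega>)"

definition word_complexity :: "'b word \<Rightarrow> nat \<Rightarrow> nat" where
  "word_complexity u n = card {u [i \<rightarrow> i + n] | i. True}"

definition sturmian :: "'b word \<Rightarrow> bool" where
  "sturmian u \<longleftrightarrow> \<not> ultimately_periodic u \<and> (\<forall>n\<ge>1. word_complexity u n = n + 1)"

end

theory Submission
  imports Defs
begin

text \<open>Each letter of the underlying word records whether two consecutive values rise
  or fall, so its factor of length \<open>n\<close> at position \<open>i\<close> is determined by the permutation
  factor of length \<open>n + 1\<close> at \<open>i\<close>; hence the word has at most \<open>n + 1\<close> factors of length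
  \<open>n\<close>. Conversely, by the Morse-Hedlund argument, a word that is not ultimately periodic
  has strictly more factors of length \<open>n + 1\<close> than of length \<open>n\<close>, hence at least \<open>n + 1\<close>.\<close>

definition factors :: "'b word \<Rightarrow> nat \<Rightarrow> 'b list set" where
  "factors u n = {u [i \<rightarrow> i + n] | i. True}"

lemma word_complexity_eq_card_factors: "word_complexity u n = card (factors u n)"
  by (simp add: word_complexity_def factors_def)

lemma factors_0: "factors u 0 = {[]}"
  by (auto simp: factors_def subsequence_def)

lemma take_factors_Suc: "take n ` factors u (Suc n) = factors u n"
proof
  show "take n ` factors u (Suc n) \<subseteq> factors u n"
    by (auto simp: factors_def subsequence_def take_map)
  show "factors u n \<subseteq> take n ` factors u (Suc n)"
  proof
    fix x assume "x \<in> factors u n"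
    then obtain i where x: "x = u [i \<rightarrow> i + n]" by (auto simp: factors_def)
    have "x = take n (u [i \<rightarrow> i + Suc n])" by (simp add: x subsequence_def take_map)
    moreover have "u [i \<rightarrow> i + Suc n] \<in> factors u (Suc n)" by (auto simp: factors_def)
    ultimately show "x \<in> take n ` factors u (Suc n)" by blast
  qed
qed

lemma finite_factors_if_finite_Suc:
  "finite (factors u (Suc n)) \<Longrightarrow> finite (factors u n)"
  using finite_imageI[of "factors u (Suc n)" "take n"] by (simp only: take_factors_Suc)

lemma card_factors_le_Suc:
  "finite (factors u (Suc n)) \<Longrightarrow> card (factors u n) \<le> card (factors u (Suc n))"
  using card_image_le[of "factors u (Suc n)" "take n"] by (simp only: take_factors_Suc)

lemma ultimately_periodic_if_shift_periodic:
  fixes s :: "'b word"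
  assumes p: "p > 0" and per: "\<And>k. s (i + k) = s (i + p + k)"
  shows "ultimately_periodic s"
proof -
  have rep: "s (i + q * p + r) = s (i + r)" for q r
  proof (induction q)
    case 0 then show ?case by simp
  next
    case (Suc q)
    have "s (i + Suc q * p + r) = s (i + p + (q * p + r))" by (simp add: algebra_simps)
    also have "\<dots> = s (i + (q * p + r))" using per[of "q * p + r"] by simp
    finally show ?case using Suc by (simp add: add.assoc)
  qed
  define w where "w = s [i \<rightarrow> i + p]"
  have lw: "length w = p" by (simp add: w_def subsequence_def)
  have "s = prefix i s \<frown> w\<^sup>\<omega>"
  proof
    fix m
    show "s m = (prefix i s \<frown> w\<^sup>\<omega>) m"
    proof (cases "m < i")
      case True then show ?thesis by (simp add: subsequence_def)
    next
      case False
      define r where "r = (m - i) mod p"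
      have m: "m = i + (m - i) div p * p + r" using False by (simp add: r_def)
      have "(prefix i s \<frown> w\<^sup>\<omega>) m = w ! r" using False p lw by (simp add: subsequence_def r_def)
      also have "\<dots> = s (i + r)" using p by (simp add: r_def w_def subsequence_def)
      finally show ?thesis using rep[of "(m - i) div p" r] m by simp
    qed
  qed
  moreover have "w \<noteq> []" using lw p by auto
  ultimately show ?thesis unfolding ultimately_periodic_def by blast
qed

lemma suffixes_eq_if_right_extension_unique:
  fixes s :: "'b word"
  assumes ext: "\<And>i j. s [i \<rightarrow> i + n] = s [j \<rightarrow> j + n] \<Longrightarrow> s (i + n) = s (j + n)"
    and eq: "s [i \<rightarrow> i + n] = s [j \<rightarrow> j + n]"
  shows "s (i + k) = s (j + k)"
proof (induction k rule: less_induct)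
  case (less k)
  show ?case
  proof (cases "k < n")
    case True
    have "map s [i..<i + n] ! k = map s [j..<j + n] ! k" using eq by (simp add: subsequence_def)
    then show ?thesis using True by simp
  next
    case False
    then obtain k' where k: "k = k' + n" by (metis add.commute le_Suc_ex not_less)
    have "s [i + k' \<rightarrow> i + k' + n] = s [j + k' \<rightarrow> j + k' + n]"
      unfolding subsequence_def
    proof (rule nth_equalityI)
      fix t assume "t < length (map s [i + k'..<i + k' + n])"
      then have "t < n" by simp
      then show "map s [i + k'..<i + k' + n] ! t = map s [j + k'..<j + k' + n] ! t"
        using less[of "k' + t"] k by (simp add: add.assoc)
    qed simp
    then have "s (i + k' + n) = s (j + k' + n)" by (rule ext)
    then show ?thesis using k by (simp add: add.assoc)
  qed
qed

lemma ultimately_periodic_if_card_factors_eq: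
  fixes s :: "'b word"
  assumes fin: "finite (factors s (Suc n))"
    and eq: "card (factors s (Suc n)) = card (factors s n)"
  shows "ultimately_periodic s"
proof -
  have inj: "inj_on (take n) (factors s (Suc n))"
    by (rule eq_card_imp_inj_on[OF fin]) (simp only: take_factors_Suc eq)
  have ext: "s (i + n) = s (j + n)" if h: "s [i \<rightarrow> i + n] = s [j \<rightarrow> j + n]" for i j
  proof -
    have "s [i \<rightarrow> i + Suc n] = s [j \<rightarrow> j + Suc n]"
    proof (rule inj_onD[OF inj])
      show "take n (s [i \<rightarrow> i + Suc n]) = take n (s [j \<rightarrow> j + Suc n])"
        using h by (simp add: subsequence_def take_map)
    qed (auto simp: factors_def)
    then have "map s [i..<Suc (i + n)] ! n = map s [j..<Suc (j + n)] ! n"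
      by (simp add: subsequence_def)
    then show ?thesis by (simp add: nth_append)
  qed
  let ?f = "\<lambda>i. (s [i \<rightarrow> i + n])"
  have "range ?f \<subseteq> factors s n" by (auto simp: factors_def)
  then have "finite (range ?f)"
    using finite_factors_if_finite_Suc[OF fin] finite_subset by blast
  then have "\<not> inj ?f" using finite_imageD infinite_UNIV_nat by blast
  then obtain i j where "i \<noteq> j" "?f i = ?f j"
    unfolding inj_def by blast
  then obtain i j where ij: "i < j" "?f i = ?f j"
    by (metis linorder_neq_iff)
  have "s (i + k) = s (j + k)" for k
    by (rule suffixes_eq_if_right_extension_unique[OF ext ij(2)])
  then show ?thesis
    using ij(1) by (intro ultimately_periodic_if_shift_periodic[of "j - i" s i]) simp_all
qed

lemma card_factors_ge_if_not_ultimately_periodic: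
  fixes s :: "'b word"
  assumes "\<not> ultimately_periodic s" and fin: "\<And>n. finite (factors s n)"
  shows "Suc n \<le> card (factors s n)"
proof (induction n)
  case 0 then show ?case by (simp add: factors_0)
next
  case (Suc n)
  have "card (factors s (Suc n)) \<noteq> card (factors s n)"
    using assms(1) ultimately_periodic_if_card_factors_eq[OF fin] by blast
  with Suc card_factors_le_Suc[OF fin, of n] show ?case by linarith
qed

lemma factors_underlying_word:
  "factors (underlying_word a) n =
   (\<lambda>R. map (\<lambda>t. if R t (Suc t) then 0 else 1) [0..<n]) ` {perm_factor a i (Suc n) | i. True}"
proof -
  have "underlying_word a [i \<rightarrow> i + n] =
        map (\<lambda>t. if perm_factor a i (Suc n) t (Suc t) then 0 else 1) [0..<n]" for i
    by (rule nth_equalityI)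
      (auto simp: subsequence_def underlying_word_def perm_factor_def add.assoc)
  then show ?thesis by (auto simp: factors_def)
qed

lemma card_factors_underlying_word_le:
  assumes "finite {perm_factor a i (Suc n) | i. True}"
  shows "finite (factors (underlying_word a) n)"
    and "card (factors (underlying_word a) n) \<le> perm_complexity a (Suc n)"
  using assms card_image_le[OF assms]
  unfolding factors_underlying_word perm_complexity_def by simp_all

theorem proposition5:
  fixes a :: "nat \<Rightarrow> real"
  assumes "inj a"
    and "\<forall>n\<ge>1. perm_complexity a n = n"
  shows "ultimately_periodic (underlying_word a) \<or> sturmian (underlying_word a)"
proof (cases "ultimately_periodic (underlying_word a)")
  case not_up: False
  have pc: "perm_complexity a (Suc n) = Suc n" for n
    using assms(2) by simp
  then have "finite {perm_factor a i (Suc n) | i. True}" for n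
    by (metis card_ge_0_finite perm_complexity_def zero_less_Suc)
  note upper = card_factors_underlying_word_le[OF this]
  have "word_complexity (underlying_word a) n = n + 1" for n
  proof -
    have "Suc n \<le> card (factors (underlying_word a) n)"
      using card_factors_ge_if_not_ultimately_periodic[OF not_up upper(1)] .
    with upper(2)[of n] pc[of n] show ?thesis
      by (simp add: word_complexity_eq_card_factors)
  qed
  then show ?thesis
    using not_up by (simp add: sturmian_def)
qed simp

end
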